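(* Let $U=(u_1,\dots,u_n)$ and $V=(v_1,\dots,v_n)$ be complex vectors of the same dimension $n$, let $A=(a_1,\dots,a_{n'})$ be a complex vector, and set $R=(V,A)$, $W=(U,A)$ (vectors of dimension $N=n+n'$). Let $p_1,\dots,p_N:\mathbb C\to\mathbb C$ and $\mathcal G(\alpha_1,\dots,\alpha_N)=\det[p_i(\alpha_j)]_{i,j=1}^N/\det[\alpha_j^{i-1}]_{i,j=1}^N$. Assume the components of $R$ are distinct, the components of $W$ are distinct, and $\mathcal G(R)\ne0$. Then $$\frac{\mathcal G(W)}{\mathcal G(R)}=(-1)^{\binom n2}\det\Big[\frac{\mathcal G(R^{i,j})}{\mathcal G(R)(u_j-v_i)}\Big]_{i,j=1}^n\frac{\Delta(U;V)}{\Delta(U)\Delta(V)},$$ where $R^{i,j}$ is the vector $R$ with the component $v_i$ replaced by $u_j$.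
   Context: $\Delta(U)=\prod_{1\le i<j\le n}(u_j-u_i)$ and $\Delta(U;V)=\prod_{i=1}^n\prod_{j=1}^n(u_i-v_j)$. *)

theory Defs
  imports Complex_Main "Jordan_Normal_Form.Determinant"
begin

text \<open>Vectors are functions on 0-based indices; a vector of dimension N is
  a function nat => complex, of which only the values at 0..N-1 matter.\<close>

definition calG :: "nat \<Rightarrow> (nat \<Rightarrow> complex \<Rightarrow> complex) \<Rightarrow> (nat \<Rightarrow> complex) \<Rightarrow> complex" where
  "calG N p \<alpha> = det (mat N N (\<lambda>(i,j). p i (\<alpha> j))) / det (mat N N (\<lambda>(i,j). \<alpha> j ^ i))"

definition Delta :: "nat \<Rightarrow> (nat \<Rightarrow> complex) \<Rightarrow> complex" where
  "Delta n U = (\<Prod>j<n. \<Prod>i<j. U j - U i)"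

definition Delta2 :: "nat \<Rightarrow> (nat \<Rightarrow> complex) \<Rightarrow> (nat \<Rightarrow> complex) \<Rightarrow> complex" where
  "Delta2 n U V = (\<Prod>i<n. \<Prod>j<n. U i - V j)"

definition concat_vec :: "nat \<Rightarrow> (nat \<Rightarrow> complex) \<Rightarrow> (nat \<Rightarrow> complex) \<Rightarrow> nat \<Rightarrow> complex" where
  "concat_vec n X Y = (\<lambda>k. if k < n then X k else Y (k - n))"

end

theory Submission
  imports Defs
begin

text \<open>Write D(a) = det [p_i(a_j)] for the alternant, so that G = D / Delta by Vandermonde.
  The matrices [p_i(w_j)] and [p_i(r_j)] share all but the first n columns, so the quotient of
  the first by the second is block lower triangular with an identity block, and by Cramer's rule
  its other diagonal block is [D(R^{i,j}) / D(R)]; hence D(W) / D(R) is the determinant of that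
  block. Passing from D to G multiplies row i of the block by the product of v_i - r_k over
  k ~= i and column j by the inverse of the product of u_j - r_k over all k, which is how the
  Vandermonde determinant changes when one point of R moves. Splitting every product over the
  blocks (V, A) and (U, A), these factors and Delta(R) / Delta(W) collapse to the sign and
  Delta(U;V) / (Delta(U) Delta(V)).\<close>

lemma prod_lessThan_add:
  "(\<Prod>k<n + m. f k) = (\<Prod>k<n. f k) * (\<Prod>k<m. f (n + k) :: 'a :: comm_monoid_mult)"
  for n m :: nat
  by (induction m) (simp_all add: ac_simps)

lemma prod_lessThan_add_remove:
  "i < n \<Longrightarrow>
    (\<Prod>k\<in>{..<n + m} - {i}. f k) = (\<Prod>k\<in>{..<n} - {i}. f k) * (\<Prod>k<m. f (n + k))"
  for f :: "nat \<Rightarrow> 'a :: comm_monoid_mult"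
proof -
  assume "i < n"
  then have split: "{..<n + m} - {i} = ({..<n} - {i}) \<union> {n..<n + m}" by auto
  have "(\<Prod>k\<in>{..<n + m} - {i}. f k) = (\<Prod>k\<in>{..<n} - {i}. f k) * (\<Prod>k\<in>{n..<n + m}. f k)"
    unfolding split by (rule prod.union_disjoint) auto
  also have "(\<Prod>k\<in>{n..<n + m}. f k) = (\<Prod>k<m. f (n + k))"
    using prod.atLeastLessThan_shift_0[of f n "n + m"] by (simp add: atLeast0LessThan comp_def)
  finally show ?thesis .
qed

lemma prod_lessThan_Suc_remove:
  "i < N \<Longrightarrow> (\<Prod>k\<in>{..<Suc N} - {i}. f k) = f N * (\<Prod>k\<in>{..<N} - {i}. f k)"
proof -
  assume "i < N"
  then have "{..<Suc N} - {i} = insert N ({..<N} - {i})" by auto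
  then show ?thesis by simp
qed

lemma prod_diff_commute:
  "(\<Prod>k<n. b - a k) = (-1) ^ n * (\<Prod>k<n. a k - b :: 'a :: comm_ring_1)"
  using prod_uminus[of "\<lambda>k. a k - b" "{..<n}"] by simp

lemma prod_prod_diff_commute:
  "(\<Prod>j<m. \<Prod>i<n. a j - b i)
     = (-1) ^ (n * m) * (\<Prod>i<n. \<Prod>j<m. b i - a j :: 'a :: comm_ring_1)"
  by (simp add: prod_diff_commute[where n = n and b = "a _"] prod.distrib power_mult
      prod.swap[of _ "{..<m}"])

lemma Delta_Suc: "Delta (Suc N) a = Delta N a * (\<Prod>k<N. a N - a k)"
  by (simp add: Delta_def)

lemma Delta_cong: "(\<And>k. k < N \<Longrightarrow> a k = b k) \<Longrightarrow> Delta N a = Delta N b"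
  unfolding Delta_def by (intro prod.cong refl) auto

lemma Delta_nonzero: "inj_on a {0..<N} \<Longrightarrow> Delta N a \<noteq> 0"
  unfolding Delta_def inj_on_def
  by (auto simp: prod_zero_iff) (metis atLeastLessThan_iff le0 less_trans less_irrefl)

lemma Delta_concat_vec:
  "Delta (n + m) (concat_vec n X Y) = Delta n X * Delta m Y * (\<Prod>j<m. \<Prod>i<n. Y j - X i)"
proof (induction m)
  case 0
  show ?case by (simp add: Delta_def concat_vec_def)
next
  case (Suc m)
  have last_row: "(\<Prod>k<n + m. concat_vec n X Y (n + m) - concat_vec n X Y k)
      = (\<Prod>i<n. Y m - X i) * (\<Prod>k<m. Y m - Y k)"
    by (simp add: prod_lessThan_add concat_vec_def)
  have "Delta (n + Suc m) (concat_vec n X Y) = Delta (n + m) (concat_vec n X Y) *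
      (\<Prod>k<n + m. concat_vec n X Y (n + m) - concat_vec n X Y k)"
    using Delta_Suc[of "n + m"] by simp
  also have "\<dots> = Delta n X * (Delta m Y * (\<Prod>k<m. Y m - Y k))
      * ((\<Prod>j<m. \<Prod>i<n. Y j - X i) * (\<Prod>i<n. Y m - X i))"
    unfolding last_row Suc by (simp only: ac_simps)
  finally show ?case by (simp add: Delta_Suc)
qed

lemma Delta_fun_upd:
  "i < N \<Longrightarrow> Delta N (a(i := x)) * (\<Prod>k\<in>{..<N} - {i}. a i - a k)
     = Delta N a * (\<Prod>k\<in>{..<N} - {i}. x - a k)"
proof (induction N)
  case 0
  then show ?case by simp
next
  case (Suc N)
  show ?case
  proof (cases "i = N")
    case True
    then have "{..<Suc N} - {i} = {..<N}" "Delta N (a(i := x)) = Delta N a"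
        "(\<Prod>k<N. (a(i := x)) N - (a(i := x)) k) = (\<Prod>k<N. x - a k)"
      by (auto intro: Delta_cong prod.cong)
    with True show ?thesis by (simp only: Delta_Suc) simp
  next
    case False
    with Suc.prems have "i < N" by simp
    let ?T = "\<Prod>k\<in>{..<N} - {i}. a N - a k"
    have split: "(\<Prod>k<N. b N - b k) = (b N - b i) * (\<Prod>k\<in>{..<N} - {i}. b N - b k)"
      for b :: "nat \<Rightarrow> complex"
      using \<open>i < N\<close> by (simp add: prod.remove)
    have "(\<Prod>k<N. (a(i := x)) N - (a(i := x)) k) = (a N - x) * ?T"
      unfolding split[of "a(i := x)"] using False by (simp cong: prod.cong_simp)
    then have upd: "Delta (Suc N) (a(i := x)) = Delta N (a(i := x)) * (a N - x) * ?T"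
      by (simp only: Delta_Suc mult.assoc)
    have old: "Delta (Suc N) a = Delta N a * (a N - a i) * ?T"
      by (simp add: Delta_Suc split[of a])
    let ?P = "\<Prod>k\<in>{..<N} - {i}. a i - a k" and ?S = "\<Prod>k\<in>{..<N} - {i}. x - a k"
    have "Delta (Suc N) (a(i := x)) * ((a i - a N) * ?P)
        = (Delta N (a(i := x)) * ?P) * ((a N - x) * (a i - a N) * ?T)"
      unfolding upd by (simp only: mult_ac)
    also have "\<dots> = (Delta N a * ?S) * ((a N - a i) * (x - a N) * ?T)"
      unfolding Suc.IH[OF \<open>i < N\<close>] by (simp add: algebra_simps)
    also have "\<dots> = Delta (Suc N) a * ((x - a N) * ?S)"
      unfolding old by (simp only: mult_ac)
    finally show ?thesis
      unfolding prod_lessThan_Suc_remove[OF \<open>i < N\<close>] .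
  qed
qed

lemma Delta_square:
  "(\<Prod>i<n. \<Prod>k\<in>{..<n} - {i}. v i - v k) = (-1) ^ (n choose 2) * Delta n v ^ 2"
proof (induction n)
  case 0
  then show ?case by (simp add: Delta_def numeral_2_eq_2)
next
  case (Suc n)
  have "{..<Suc n} - {n} = {..<n}" by auto
  then have "(\<Prod>i<Suc n. \<Prod>k\<in>{..<Suc n} - {i}. v i - v k)
     = (\<Prod>i<n. v i - v n) * (\<Prod>i<n. \<Prod>k\<in>{..<n} - {i}. v i - v k) * (\<Prod>k<n. v n - v k)"
    by (simp add: prod_lessThan_Suc_remove prod.distrib)
  also have "\<dots> = (-1) ^ n * (-1) ^ (n choose 2) * Delta n v ^ 2 * (\<Prod>k<n. v n - v k) ^ 2"
    unfolding Suc prod_diff_commute[where n = n and b = "v n" and a = v]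
    by (simp add: power2_eq_square ac_simps)
  also have "\<dots> = (-1) ^ (Suc n choose 2) * Delta (Suc n) v ^ 2"
    by (simp add: Delta_Suc numeral_2_eq_2 power_add power_mult_distrib ac_simps)
  finally show ?case .
qed

lemma det_mat_scale_rows_cols:
  "det (mat n n (\<lambda>(i, j). r i * c j * f i j))
     = (\<Prod>i<n. r i) * (\<Prod>j<n. c j) * det (mat n n (\<lambda>(i, j). f i j :: 'a :: comm_ring_1))"
proof -
  let ?M = "mat n n (\<lambda>(i, j). r i * c j * f i j)" and ?F = "mat n n (\<lambda>(i, j). f i j)"
  have carrier: "?M \<in> carrier_mat n n" "?F \<in> carrier_mat n n"
    by auto
  show ?thesis unfolding det_def'[OF carrier(1)] det_def'[OF carrier(2)] sum_distrib_left
  proof (rule sum.cong[OF refl])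
    fix \<pi> assume "\<pi> \<in> {\<pi>. \<pi> permutes {0..<n}}"
    then have \<pi>: "\<pi> permutes {..<n}" by (simp add: atLeast0LessThan)
    have "(\<Prod>i<n. c (\<pi> i)) = (\<Prod>j<n. c j)"
      using prod.permute[OF \<pi>, of c] by (simp add: comp_def)
    have "(\<Prod>i<n. ?M $$ (i, \<pi> i)) = (\<Prod>i<n. r i * c (\<pi> i) * ?F $$ (i, \<pi> i))"
      using permutes_in_image[OF \<pi>] by (intro prod.cong) auto
    then have "(\<Prod>i<n. ?M $$ (i, \<pi> i)) = (\<Prod>i<n. r i) * (\<Prod>j<n. c j) * (\<Prod>i<n. ?F $$ (i, \<pi> i))"
      unfolding prod.distrib \<open>(\<Prod>i<n. c (\<pi> i)) = (\<Prod>j<n. c j)\<close> .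
    then show "signof \<pi> * (\<Prod>i = 0..<n. ?M $$ (i, \<pi> i))
      = (\<Prod>i<n. r i) * (\<Prod>j<n. c j) * (signof \<pi> * (\<Prod>i = 0..<n. ?F $$ (i, \<pi> i)))"
      by (simp add: atLeast0LessThan ac_simps)
  qed
qed

lemma det_replace_col_col:
  assumes A: "A \<in> carrier_mat N N" and "i < N" "j < N"
  shows "det (replace_col A (col A j) i) = (if i = j then det A else 0)"
proof (cases "i = j")
  case True
  then have "replace_col A (col A j) i = A"
    using A by (auto simp: replace_col_def)
  with True show ?thesis by simp
next
  case False
  have "det (replace_col A (col A j) i) = 0"
    by (rule det_identical_columns[OF _ False \<open>i < N\<close> \<open>j < N\<close>])
      (use A \<open>i < N\<close> \<open>j < N\<close> in \<open>auto simp: replace_col_def\<close>)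
  with False show ?thesis by simp
qed

lemma cramer_solution_mat:
  fixes A B :: "'a :: field mat"
  assumes A: "A \<in> carrier_mat N N" and B: "B \<in> carrier_mat N m" and "det A \<noteq> 0"
  shows "A * mat N m (\<lambda>(i, j). det (replace_col A (col B j) i) / det A) = B"
proof -
  define Ainv where "Ainv = (1 / det A) \<cdot>\<^sub>m adj_mat A"
  define X where "X = Ainv * B"
  have Ainv: "Ainv \<in> carrier_mat N N"
    using adj_mat(1)[OF A] by (simp add: Ainv_def)
  then have X: "X \<in> carrier_mat N m"
    using B by (simp add: X_def)
  have "A * Ainv = 1\<^sub>m N"
    using adj_mat[OF A] A \<open>det A \<noteq> 0\<close> unfolding Ainv_def
    by (simp add: mult_smult_distrib[OF A adj_mat(1)[OF A]]) (intro eq_matI; auto)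
  then have AX: "A * X = B"
    using A Ainv B by (simp add: X_def assoc_mult_mat[symmetric, OF A Ainv B])
  have "X = mat N m (\<lambda>(i, j). det (replace_col A (col B j) i) / det A)"
  proof (rule eq_matI)
    fix i j assume "i < dim_row (mat N m (\<lambda>(i, j). det (replace_col A (col B j) i) / det A))"
      "j < dim_col (mat N m (\<lambda>(i, j). det (replace_col A (col B j) i) / det A))"
    then have ij: "i < N" "j < m" by auto
    have "col B j = A *\<^sub>v col X j"
      using AX col_mult2[OF A X \<open>j < m\<close>] by simp
    then have "det (replace_col A (col B j) i) = X $$ (i, j) * det A"
      using cramer_lemma_mat[OF A _ \<open>i < N\<close>, of "col X j"] X ij by simp
    then show "X $$ (i, j) = mat N m (\<lambda>(i, j). det (replace_col A (col B j) i) / det A) $$ (i, j)"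
      using ij \<open>det A \<noteq> 0\<close> by simp
  qed (use X in auto)
  with AX show ?thesis by simp
qed

lemma det_replace_first_cols:
  fixes A B :: "'a :: field mat"
  assumes A: "A \<in> carrier_mat (n + m) (n + m)" and B: "B \<in> carrier_mat (n + m) (n + m)"
    and "det A \<noteq> 0" and same_cols: "\<And>j. n \<le> j \<Longrightarrow> j < n + m \<Longrightarrow> col B j = col A j"
  shows "det B = det A * det (mat n n (\<lambda>(i, j). det (replace_col A (col B j) i) / det A))"
proof -
  define X where "X = mat (n + m) (n + m) (\<lambda>(i, j). det (replace_col A (col B j) i) / det A)"
  define X1 where "X1 = mat n n (\<lambda>(i, j). X $$ (i, j))"
  define X3 where "X3 = mat m n (\<lambda>(i, j). X $$ (n + i, j))"
  have "X = four_block_mat X1 (0\<^sub>m n m) X3 (1\<^sub>m m)"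
    by (rule eq_matI) (auto simp: X_def X1_def X3_def four_block_mat_def same_cols
        det_replace_col_col[OF A] \<open>det A \<noteq> 0\<close>)
  then have "det X = det X1 * det (1\<^sub>m m)"
    by (simp only:) (rule det_four_block_mat_upper_right_zero, auto simp: X1_def X3_def)
  moreover have "det B = det A * det X"
  proof -
    have "A * X = B" "X \<in> carrier_mat (n + m) (n + m)"
      unfolding X_def by (rule cramer_solution_mat[OF A B \<open>det A \<noteq> 0\<close>]) simp
    then show ?thesis using det_mult[OF A] by metis
  qed
  moreover have "X1 = mat n n (\<lambda>(i, j). det (replace_col A (col B j) i) / det A)"
    by (rule eq_matI) (auto simp: X1_def X_def)
  ultimately show ?thesis by simp
qed

lemma det_vandermonde: "det (mat N N (\<lambda>(i, j). a j ^ i)) = Delta N a"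
proof (induction N)
  case 0
  then show ?case by (simp add: Delta_def)
next
  case (Suc N)
  define x where "x = a N"
  define M where "M = mat (Suc N) (Suc N) (\<lambda>(i, j). a j ^ i)"
  define L :: "complex mat"
    where "L = mat (Suc N) (Suc N) (\<lambda>(i, j). if i = j then 1 else if i = Suc j then - x else 0)"
  define Q where "Q = L * M"
  have M: "M \<in> carrier_mat (Suc N) (Suc N)" and L: "L \<in> carrier_mat (Suc N) (Suc N)"
    and Q: "Q \<in> carrier_mat (Suc N) (Suc N)"
    by (auto simp: M_def L_def Q_def)
  have "diag_mat L = replicate (Suc N) 1"
    unfolding diag_mat_def
    by (rule nth_equalityI) (auto simp del: upt_Suc replicate_Suc simp: L_def)
  then have "det L = 1"
    by (subst det_lower_triangular[OF _ L]) (auto simp: L_def diag_mat_def map_replicate_const)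
  then have "det M = det Q"
    unfolding Q_def det_mult[OF L M] by simp
  \<comment> \<open>row \<open>i\<close> of \<open>Q\<close> is row \<open>i\<close> of \<open>M\<close> minus \<open>x\<close> times row \<open>i - 1\<close>, which clears the last column\<close>
  have Q_entry: "Q $$ (i, j) = (if i = 0 then 1 else a j ^ (i - 1) * (a j - x))"
    if "i < Suc N" "j < Suc N" for i j
  proof -
    have "Q $$ (i, j) = (\<Sum>k<Suc N. L $$ (i, k) * a j ^ k)"
      using that L M by (simp add: Q_def scalar_prod_def M_def lessThan_atLeast0 row_def col_def)
    also have "\<dots> = (\<Sum>k<Suc N. (if k = i then a j ^ k else 0) + (if Suc k = i then - x * a j ^ k else 0))"
      using that by (intro sum.cong refl) (auto simp: L_def)
    also have "\<dots> = a j ^ i + (if i = 0 then 0 else - x * a j ^ (i - 1))"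
      using that by (cases i) (auto simp: sum.distrib)
    also have "\<dots> = (if i = 0 then 1 else a j ^ (i - 1) * (a j - x))"
      by (cases i) (auto simp: algebra_simps)
    finally show ?thesis .
  qed
  have "det Q = (\<Sum>i<Suc N. Q $$ (i, N) * cofactor Q i N)"
    by (rule laplace_expansion_column[OF Q]) simp
  also have "\<dots> = cofactor Q 0 N"
    by (subst sum.remove[of _ 0]) (auto simp: Q_entry x_def intro!: sum.neutral)
  also have "\<dots> = (-1) ^ N * det (mat N N (\<lambda>(i, j). 1 * (a j - x) * a j ^ i))"
    unfolding cofactor_def using Q
    by (auto intro!: arg_cong[of _ _ det] eq_matI simp: mat_delete_def Q_entry ac_simps)
  also have "\<dots> = (-1) ^ N * (\<Prod>j<N. a j - x) * Delta N a"
    unfolding det_mat_scale_rows_cols Suc by simp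
  also have "\<dots> = Delta (Suc N) a"
    unfolding Delta_Suc prod_diff_commute[where b = "a N" and a = a and n = N] x_def by simp
  finally show ?case
    using \<open>det M = det Q\<close> by (simp only: M_def)
qed

definition alternant :: "nat \<Rightarrow> (nat \<Rightarrow> 'b \<Rightarrow> 'a :: comm_ring_1) \<Rightarrow> (nat \<Rightarrow> 'b) \<Rightarrow> 'a" where
  "alternant N p a = det (mat N N (\<lambda>(i, j). p i (a j)))"

lemma calG_alternant: "calG N p a = alternant N p a / Delta N a"
  unfolding calG_def alternant_def det_vandermonde ..

lemma alternant_ratio_det:
  fixes p :: "nat \<Rightarrow> 'b \<Rightarrow> 'a :: field"
  assumes "alternant (n + m) p R \<noteq> 0" and "\<And>k. n \<le> k \<Longrightarrow> W k = R k"
  shows "alternant (n + m) p W = alternant (n + m) p R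
    * det (mat n n (\<lambda>(i, j). alternant (n + m) p (R(i := W j)) / alternant (n + m) p R))"
proof -
  let ?A = "mat (n + m) (n + m) (\<lambda>(i, j). p i (R j))"
  let ?B = "mat (n + m) (n + m) (\<lambda>(i, j). p i (W j))"
  have "replace_col ?A (col ?B j) i = mat (n + m) (n + m) (\<lambda>(k, l). p k ((R(i := W j)) l))"
    if "j < n" for i j
    using that by (intro eq_matI) (auto simp: replace_col_def)
  then have "mat n n (\<lambda>(i, j). det (replace_col ?A (col ?B j) i) / det ?A)
      = mat n n (\<lambda>(i, j). alternant (n + m) p (R(i := W j)) / alternant (n + m) p R)"
    by (intro eq_matI) (auto simp: alternant_def)
  moreover have "det ?B = det ?A * det (mat n n (\<lambda>(i, j). det (replace_col ?A (col ?B j) i) / det ?A))"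
    using assms by (intro det_replace_first_cols) (auto simp: alternant_def)
  ultimately show ?thesis
    by (simp add: alternant_def)
qed

lemma calG_fun_upd_div:
  assumes "inj_on a {0..<N}" "i < N" "\<And>k. k < N \<Longrightarrow> x \<noteq> a k" "calG N p a \<noteq> 0"
  shows "calG N p (a(i := x)) / (calG N p a * (x - a i))
    = (\<Prod>k\<in>{..<N} - {i}. a i - a k) / (\<Prod>k<N. x - a k)
      * (alternant N p (a(i := x)) / alternant N p a)"
proof -
  let ?P = "\<Prod>k\<in>{..<N} - {i}. a i - a k" and ?S = "\<Prod>k\<in>{..<N} - {i}. x - a k"
  have "?P \<noteq> 0"
    using assms(1,2) by (auto simp: prod_zero_iff inj_on_def)
  have F: "(\<Prod>k<N. x - a k) = (x - a i) * ?S"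
    using assms(2) by (simp add: prod.remove)
  then have "x - a i \<noteq> 0" "?S \<noteq> 0"
    using assms(3) by (auto simp: prod_zero_iff)
  have Delta_upd: "Delta N (a(i := x)) = Delta N a * ?S / ?P"
    using Delta_fun_upd[OF assms(2)] \<open>?P \<noteq> 0\<close> by (simp add: field_simps)
  have "Delta N a \<noteq> 0" "alternant N p a \<noteq> 0"
    using Delta_nonzero[OF assms(1)] assms(4) by (auto simp: calG_alternant)
  with \<open>?P \<noteq> 0\<close> \<open>x - a i \<noteq> 0\<close> \<open>?S \<noteq> 0\<close> show ?thesis
    unfolding calG_alternant Delta_upd F by (simp add: field_simps)
qed

lemma Delta_concat_vec_ratio:
  fixes n m :: nat and U V A :: "nat \<Rightarrow> complex"
  defines "R \<equiv> concat_vec n V A"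
  assumes R_distinct: "inj_on R {0..<n + m}"
    and W_distinct: "inj_on (concat_vec n U A) {0..<n + m}"
    and UV_distinct: "\<forall>i<n. \<forall>j<n. U j \<noteq> V i"
  shows "Delta (n + m) R / Delta (n + m) (concat_vec n U A)
    = (-1) ^ (n choose 2) * (\<Prod>i<n. \<Prod>k\<in>{..<n + m} - {i}. R i - R k) / (\<Prod>j<n. \<Prod>k<n + m. U j - R k)
      * Delta2 n U V / (Delta n U * Delta n V)"
proof -
  define XV where "XV = (\<Prod>i<n. \<Prod>l<m. V i - A l)"
  define XU where "XU = (\<Prod>j<n. \<Prod>l<m. U j - A l)"
  define s :: complex where "s = (-1) ^ (n * m)"
  define c :: complex where "c = (-1) ^ (n choose 2)"
  have DR: "Delta (n + m) R = Delta n V * Delta m A * (s * XV)"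
    unfolding R_def Delta_concat_vec prod_prod_diff_commute[where a = A and b = V] XV_def s_def ..
  have DW: "Delta (n + m) (concat_vec n U A) = Delta n U * Delta m A * (s * XU)"
    unfolding Delta_concat_vec prod_prod_diff_commute[where a = A and b = U] XU_def s_def ..
  have "(\<Prod>i<n. \<Prod>k\<in>{..<n + m} - {i}. R i - R k) = (\<Prod>i<n. \<Prod>k\<in>{..<n} - {i}. V i - V k) * XV"
    unfolding XV_def prod.distrib[symmetric]
    by (intro prod.cong refl) (simp add: prod_lessThan_add_remove R_def concat_vec_def cong: prod.cong_simp)
  also have "\<dots> = c * Delta n V ^ 2 * XV"
    unfolding Delta_square c_def ..
  finally have prod_P: "(\<Prod>i<n. \<Prod>k\<in>{..<n + m} - {i}. R i - R k) = c * Delta n V ^ 2 * XV" .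
  have prod_F: "(\<Prod>j<n. \<Prod>k<n + m. U j - R k) = Delta2 n U V * XU"
    unfolding Delta2_def XU_def prod.distrib[symmetric] prod_lessThan_add
    by (simp add: R_def concat_vec_def)
  have "Delta (n + m) R \<noteq> 0" "Delta (n + m) (concat_vec n U A) \<noteq> 0"
    using Delta_nonzero R_distinct W_distinct by auto
  then have "Delta n U \<noteq> 0" "Delta n V \<noteq> 0" "Delta m A \<noteq> 0" "XU \<noteq> 0" "XV \<noteq> 0"
    using DR DW by auto
  moreover have "Delta2 n U V \<noteq> 0"
    using UV_distinct by (auto simp: Delta2_def prod_zero_iff)
  moreover have "c * c = 1" "s \<noteq> 0"
    by (simp_all add: c_def s_def flip: power_add mult_2)
  ultimately have "Delta n V * Delta m A * (s * XV) / (Delta n U * Delta m A * (s * XU))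
      = c * (c * Delta n V ^ 2 * XV) / (Delta2 n U V * XU) * Delta2 n U V / (Delta n U * Delta n V)"
    by (simp add: field_simps power2_eq_square)
  then show ?thesis
    unfolding DR DW prod_P prod_F c_def[symmetric] .
qed

lemma ne_concat_vec:
  assumes "inj_on (concat_vec n U A) {0..<n + m}" and "\<forall>i<n. \<forall>j<n. U j \<noteq> V i"
    and "j < n" and "k < n + m"
  shows "U j \<noteq> concat_vec n V A k"
proof (cases "k < n")
  case True
  then show ?thesis using assms(2,3) by (simp add: concat_vec_def)
next
  case False
  then have "concat_vec n U A j \<noteq> concat_vec n U A k"
    using inj_on_contraD[OF assms(1), of j k] assms(3,4) by auto
  with False \<open>j < n\<close> show ?thesis by (simp add: concat_vec_def)
qed

lemma det_calG_quotients:
  fixes n m :: nat and U V A :: "nat \<Rightarrow> complex" and p :: "nat \<Rightarrow> complex \<Rightarrow> complex"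
  defines "R \<equiv> concat_vec n V A" and "W \<equiv> concat_vec n U A"
  assumes R_distinct: "inj_on R {0..<n + m}"
    and W_distinct: "inj_on W {0..<n + m}"
    and UV_distinct: "\<forall>i<n. \<forall>j<n. U j \<noteq> V i"
    and G_nonzero: "calG (n + m) p R \<noteq> 0"
  shows "det (mat n n (\<lambda>(i, j). calG (n + m) p (R(i := U j)) / (calG (n + m) p R * (U j - V i))))
    = (\<Prod>i<n. \<Prod>k\<in>{..<n + m} - {i}. R i - R k) / (\<Prod>j<n. \<Prod>k<n + m. U j - R k)
      * (alternant (n + m) p W / alternant (n + m) p R)"
proof -
  let ?D = "alternant (n + m) p"
  define P where "P i = (\<Prod>k\<in>{..<n + m} - {i}. R i - R k)" for i
  define F where "F j = (\<Prod>k<n + m. U j - R k)" for j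
  have entry: "calG (n + m) p (R(i := U j)) / (calG (n + m) p R * (U j - V i))
      = P i * (1 / F j) * (?D (R(i := U j)) / ?D R)" if "i < n" "j < n" for i j
  proof -
    have "U j \<noteq> R k" if "k < n + m" for k
      using ne_concat_vec[OF W_distinct[unfolded W_def] UV_distinct \<open>j < n\<close> that] by (simp add: R_def)
    moreover have "R i = V i" "i < n + m"
      using \<open>i < n\<close> by (simp_all add: R_def concat_vec_def)
    ultimately show ?thesis
      using calG_fun_upd_div[OF R_distinct \<open>i < n + m\<close> _ G_nonzero] by (simp add: P_def F_def)
  qed
  have "det (mat n n (\<lambda>(i, j). calG (n + m) p (R(i := U j)) / (calG (n + m) p R * (U j - V i))))
      = det (mat n n (\<lambda>(i, j). P i * (1 / F j) * (?D (R(i := U j)) / ?D R)))"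
    by (intro arg_cong[of _ _ det] eq_matI) (auto simp: entry)
  also have "\<dots> = (\<Prod>i<n. P i) / (\<Prod>j<n. F j) * det (mat n n (\<lambda>(i, j). ?D (R(i := U j)) / ?D R))"
    unfolding det_mat_scale_rows_cols by (simp add: prod_dividef)
  also have "mat n n (\<lambda>(i, j). ?D (R(i := U j)) / ?D R) = mat n n (\<lambda>(i, j). ?D (R(i := W j)) / ?D R)"
    by (intro eq_matI) (auto simp: W_def concat_vec_def)
  also have "det (mat n n (\<lambda>(i, j). ?D (R(i := W j)) / ?D R)) = ?D W / ?D R"
    using alternant_ratio_det[of n m p R W] G_nonzero
    by (simp add: calG_alternant R_def W_def concat_vec_def)
  finally show ?thesis
    unfolding P_def F_def .
qed

theorem lemma4p7:
  fixes n n' :: nat and U V A :: "nat \<Rightarrow> complex"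
    and p :: "nat \<Rightarrow> complex \<Rightarrow> complex"
  defines "N \<equiv> n + n'"
  defines "R \<equiv> concat_vec n V A"
  defines "W \<equiv> concat_vec n U A"
  assumes R_distinct: "inj_on R {0..<N}"
    and W_distinct: "inj_on W {0..<N}"
    and UV_distinct: "\<forall>i<n. \<forall>j<n. U j \<noteq> V i"
    and G_nonzero: "calG N p R \<noteq> 0"
  shows "calG N p W / calG N p R =
    (-1) ^ (n choose 2)
    * det (mat n n (\<lambda>(i,j). calG N p (R(i := U j)) / (calG N p R * (U j - V i))))
    * Delta2 n U V / (Delta n U * Delta n V)"
proof -
  have "calG N p W / calG N p R = alternant N p W / alternant N p R * (Delta N R / Delta N W)"
    using G_nonzero Delta_nonzero[OF R_distinct] Delta_nonzero[OF W_distinct]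
    by (simp add: calG_alternant field_simps)
  moreover note det_calG_quotients[of n V A n' U p, folded R_def W_def N_def]
  moreover note Delta_concat_vec_ratio[of n V A n' U, folded R_def W_def N_def]
  ultimately show ?thesis
    using R_distinct W_distinct UV_distinct G_nonzero by (simp add: ac_simps)
qed

end
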